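(* Let $A\subset\mathbb{Z}$ be an extremal set with cardinality $k$ which is the union of two segments. Then $A$ is Freiman isomorphic of order 2 to one of the following sets: (i) $[0,k+b-1]\setminus[1,b]\subset\mathbb{Z}$ for some $1\le b\le k-3$, with $\dim(A)=1$, $\mathrm{vol}(A)=k+b$ and $|2A|=2k-1+b$; or (ii) $([0,k_1-1]\times\{0\})\cup([0,k_2-1]\times\{1\})\subset\mathbb{Z}^2$ with $k_1+k_2=k$, $k_1,k_2\ge1$, $\dim(A)=2$, $\mathrm{vol}(A)=k$ and $|2A|=3k-3$.
   Context: For integers $x\le y$, $[x,y]=\{n\in\mathbb{Z}:x\le n\le y\}$; $2A=A+A$. Sets $A\subset G$, $B\subset G'$ in abelian groups are Freiman isomorphic of order 2 ($F_2$-isomorphic) if there is a bijection $\phi:A\to B$ with $x+y=z+t\iff\phi(x)+\phi(y)=\phi(z)+\phi(t)$ for all $x,y,z,t\in A$. The dimension $\dim(A)$ is the largest $d$ such that some $B\subset\mathbb{Z}^d$ not contained in a hyperplane is $F_2$-isomorphic to $A$. The volume $\mathrm{vol}(A)$ of a $d$-dimensional set is the minimum of $|\mathrm{conv}(B)\cap\mathbb{Z}^d|$ over $B\subset\mathbb{Z}^d$ $F_2$-isomorphic to $A$. Let $\mathrm{vol}(k,T,d)=\max\{\mathrm{vol}(A):A\subset\mathbb{N},|A|=k,|2A|=T,\dim(A)=d\}$; $A$ is extremal if $\mathrm{vol}(A)=\mathrm{vol}(|A|,|2A|,\dim(A))$. A segment is a nonempty set of consecutive integers; $A\subset\mathbb{Z}$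 is the union of $s$ segments if $A=P_1\cup\dots\cup P_s$ with $P_i$ segments of lengths $k_i$, $\max P_i+1<\min P_{i+1}$ for $1\le i<s$, and $k_i>1$ for some $i$. *)

theory Defs
  imports Complex_Main "HOL-Library.Function_Algebras"
begin

definition sumset :: "'a::ab_group_add set \<Rightarrow> 'a set \<Rightarrow> 'a set" where
  "sumset A B = {a + b | a b. a \<in> A \<and> b \<in> B}"

definition F2_isomorphic :: "'a::ab_group_add set \<Rightarrow> 'b::ab_group_add set \<Rightarrow> bool" where
  "F2_isomorphic A B \<longleftrightarrow> (\<exists>\<phi>. bij_betw \<phi> A B \<and>
     (\<forall>x\<in>A. \<forall>y\<in>A. \<forall>z\<in>A. \<forall>t\<in>A.
        (x + y = z + t \<longleftrightarrow> \<phi> x + \<phi> y = \<phi> z + \<phi> t)))"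

text \<open>The lattice Z^d, encoded as integer functions on nat vanishing from index d on.\<close>
definition lattice :: "nat \<Rightarrow> (nat \<Rightarrow> int) set" where
  "lattice d = {x. \<forall>i\<ge>d. x i = 0}"

definition in_hyperplane :: "nat \<Rightarrow> (nat \<Rightarrow> int) set \<Rightarrow> bool" where
  "in_hyperplane d B \<longleftrightarrow> (\<exists>a::nat \<Rightarrow> real. \<exists>c::real. (\<exists>i<d. a i \<noteq> 0) \<and>
      (\<forall>b\<in>B. (\<Sum>i<d. a i * real_of_int (b i)) = c))"

definition in_conv :: "(nat \<Rightarrow> int) set \<Rightarrow> (nat \<Rightarrow> int) \<Rightarrow> bool" where
  "in_conv B p \<longleftrightarrow> (\<exists>u::(nat \<Rightarrow> int) \<Rightarrow> real. (\<forall>b\<in>B. u b \<ge> 0) \<and> (\<Sum>b\<in>B. u b) = 1 \<and>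
      (\<forall>i. (\<Sum>b\<in>B. u b * real_of_int (b i)) = real_of_int (p i)))"

definition hull_points :: "nat \<Rightarrow> (nat \<Rightarrow> int) set \<Rightarrow> nat" where
  "hull_points d B = card {p \<in> lattice d. in_conv B p}"

definition fdim :: "'a::ab_group_add set \<Rightarrow> nat" where
  "fdim A = (GREATEST d. \<exists>B. B \<subseteq> lattice d \<and> \<not> in_hyperplane d B \<and> F2_isomorphic A B)"

definition fvol :: "'a::ab_group_add set \<Rightarrow> nat" where
  "fvol A = (LEAST v. \<exists>B. B \<subseteq> lattice (fdim A) \<and> F2_isomorphic A B \<and>
                          v = hull_points (fdim A) B)"

definition vol_max :: "nat \<Rightarrow> nat \<Rightarrow> nat \<Rightarrow> nat" where
  "vol_max k T d = Sup {fvol A | A :: int set. A \<subseteq> {0..} \<and> finite A \<and> card A = k \<and>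
                          card (sumset A A) = T \<and> fdim A = d}"

definition extremal :: "int set \<Rightarrow> bool" where
  "extremal A \<longleftrightarrow> fvol A = vol_max (card A) (card (sumset A A)) (fdim A)"

definition union_two_segments :: "int set \<Rightarrow> bool" where
  "union_two_segments A \<longleftrightarrow> (\<exists>a1 b1 a2 b2. A = {a1..b1} \<union> {a2..b2} \<and>
     a1 \<le> b1 \<and> b1 + 1 < a2 \<and> a2 \<le> b2 \<and> (a1 < b1 \<or> a2 < b2))"

definition vec2 :: "int \<Rightarrow> int \<Rightarrow> (nat \<Rightarrow> int)" where
  "vec2 x y = (\<lambda>i. if i = 0 then x else if i = 1 then y else 0)"

end

theory Submission
  imports Defs
begin

text \<open>A Freiman homomorphism on \<open>A = [a1, b1] \<union> [a2, b2]\<close> is affine on each segment with a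
  common slope, so every Freiman image of \<open>A\<close> lies in a plane. If the gap \<open>g = a2 - b1 - 1\<close> is
  shorter than one of the segments, an additive quadruple straddles it and the image even lies on
  a line; then \<open>dim A = 1\<close> and \<open>vol A = k + g\<close> is the length of the hull of the line image.
  Otherwise \<open>A\<close> is Freiman isomorphic to two rows of lattice points, which are all the lattice
  points of their convex hull, so \<open>dim A = 2\<close> and \<open>vol A = k\<close>.
  In the short-gap case with two segments of length at least two, \<open>|2A| \<ge> 2k + g\<close>, and the set
  \<open>{0} \<union> [b + 1, k + b - 1]\<close> with \<open>b = |2A| - 2k + 1 > g\<close> has the same \<open>k\<close> and \<open>|2A|\<close>
  but larger volume, so \<open>A\<close> is not extremal; one segment must be a single point.\<close>

section \<open>Freiman isomorphisms\<close>

definition F2_hom :: "('a::ab_group_add \<Rightarrow> 'b::ab_group_add) \<Rightarrow> 'a set \<Rightarrow> bool" where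
  "F2_hom \<phi> A \<longleftrightarrow> (\<forall>x\<in>A. \<forall>y\<in>A. \<forall>z\<in>A. \<forall>t\<in>A. x + y = z + t \<longrightarrow> \<phi> x + \<phi> y = \<phi> z + \<phi> t)"

lemma F2_homD:
  "F2_hom \<phi> A \<Longrightarrow> x \<in> A \<Longrightarrow> y \<in> A \<Longrightarrow> z \<in> A \<Longrightarrow> t \<in> A \<Longrightarrow> x + y = z + t \<Longrightarrow>
     \<phi> x + \<phi> y = \<phi> z + \<phi> t"
  unfolding F2_hom_def by blast

lemma F2_isomorphicE:
  assumes "F2_isomorphic A B"
  obtains \<phi> where "bij_betw \<phi> A B" "F2_hom \<phi> A"
  using assms unfolding F2_isomorphic_def F2_hom_def by blast

lemma F2_isomorphic_imageI:
  fixes f :: "'a::ab_group_add \<Rightarrow> 'b::ab_group_add"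
  assumes "inj_on f A"
    and "\<And>x y z t. x \<in> A \<Longrightarrow> y \<in> A \<Longrightarrow> z \<in> A \<Longrightarrow> t \<in> A \<Longrightarrow>
           x + y = z + t \<longleftrightarrow> f x + f y = f z + f t"
  shows "F2_isomorphic A (f ` A)"
  unfolding F2_isomorphic_def using assms by (metis inj_on_imp_bij_betw)

lemma F2_isomorphic_affine_image:
  fixes A :: "int set" and c m :: int
  assumes "m \<noteq> 0"
  shows "F2_isomorphic A ((\<lambda>x. c + m * x) ` A)"
proof (rule F2_isomorphic_imageI)
  show "inj_on (\<lambda>x. c + m * x) A" using assms by (auto simp: inj_on_def)
  fix x y z t :: int
  have "c + m * x + (c + m * y) = c + m * z + (c + m * t) \<longleftrightarrow> m * (x + y) = m * (z + t)"
    by (simp add: algebra_simps)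
  then show "x + y = z + t \<longleftrightarrow> c + m * x + (c + m * y) = c + m * z + (c + m * t)"
    using assms by simp
qed

lemma F2_isomorphic_sym:
  assumes "F2_isomorphic A B"
  shows "F2_isomorphic B A"
proof -
  obtain f where f: "bij_betw f A B"
    and rel: "\<And>x y z t. x \<in> A \<Longrightarrow> y \<in> A \<Longrightarrow> z \<in> A \<Longrightarrow> t \<in> A \<Longrightarrow>
                x + y = z + t \<longleftrightarrow> f x + f y = f z + f t"
    using assms unfolding F2_isomorphic_def by blast
  let ?g = "inv_into A f"
  have g: "f (?g x) = x" "?g x \<in> A" if "x \<in> B" for x
    using f that by (simp_all add: bij_betw_inv_into_right inv_into_into bij_betw_imp_surj_on)
  show ?thesis unfolding F2_isomorphic_def
  proof (intro exI conjI ballI)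
    show "bij_betw ?g B A" using f by (rule bij_betw_inv_into)
    fix x y z t assume "x \<in> B" "y \<in> B" "z \<in> B" "t \<in> B"
    then show "x + y = z + t \<longleftrightarrow> ?g x + ?g y = ?g z + ?g t"
      using rel[of "?g x" "?g y" "?g z" "?g t"] g by simp
  qed
qed

lemma F2_isomorphic_trans:
  assumes "F2_isomorphic A B" "F2_isomorphic B C"
  shows "F2_isomorphic A C"
proof -
  obtain f where f: "bij_betw f A B"
    and rf: "\<And>x y z t. x \<in> A \<Longrightarrow> y \<in> A \<Longrightarrow> z \<in> A \<Longrightarrow> t \<in> A \<Longrightarrow>
               x + y = z + t \<longleftrightarrow> f x + f y = f z + f t"
    using assms(1) unfolding F2_isomorphic_def by blast
  obtain g where g: "bij_betw g B C"
    and rg: "\<And>x y z t. x \<in> B \<Longrightarrow> y \<in> B \<Longrightarrow> z \<in> B \<Longrightarrow> t \<in> B \<Longrightarrow>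
               x + y = z + t \<longleftrightarrow> g x + g y = g z + g t"
    using assms(2) unfolding F2_isomorphic_def by blast
  show ?thesis unfolding F2_isomorphic_def
  proof (intro exI conjI ballI)
    show "bij_betw (g \<circ> f) A C" using f g by (rule bij_betw_trans)
    fix x y z t assume "x \<in> A" "y \<in> A" "z \<in> A" "t \<in> A"
    then show "x + y = z + t \<longleftrightarrow> (g \<circ> f) x + (g \<circ> f) y = (g \<circ> f) z + (g \<circ> f) t"
      using rf rg bij_betw_apply[OF f] by simp
  qed
qed

lemma F2_isomorphic_iff_left:
  assumes "F2_isomorphic A A'"
  shows "F2_isomorphic A B \<longleftrightarrow> F2_isomorphic A' B"
  using assms F2_isomorphic_sym F2_isomorphic_trans by metis

lemma F2_isomorphic_fdim_eq:
  assumes "F2_isomorphic A A'"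
  shows "fdim A = fdim A'"
  unfolding fdim_def F2_isomorphic_iff_left[OF assms] ..

lemma F2_isomorphic_fvol_eq:
  assumes "F2_isomorphic A A'"
  shows "fvol A = fvol A'"
  unfolding fvol_def F2_isomorphic_iff_left[OF assms] F2_isomorphic_fdim_eq[OF assms] ..

lemma fdim_eqI:
  assumes "B \<subseteq> lattice d" "\<not> in_hyperplane d B" "F2_isomorphic A B"
    and "\<And>d' B'. d < d' \<Longrightarrow> F2_isomorphic A B' \<Longrightarrow> in_hyperplane d' B'"
  shows "fdim A = d"
  unfolding fdim_def
proof (rule Greatest_equality)
  show "\<exists>B \<subseteq> lattice d. \<not> in_hyperplane d B \<and> F2_isomorphic A B"
    using assms(1-3) by blast
  show "d' \<le> d" if "\<exists>B' \<subseteq> lattice d'. \<not> in_hyperplane d' B' \<and> F2_isomorphic A B'" for d'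
    using that assms(4) by (meson not_le)
qed

lemma fvol_eqI:
  assumes "B \<subseteq> lattice (fdim A)" "F2_isomorphic A B" "hull_points (fdim A) B = v"
    and "\<And>B'. B' \<subseteq> lattice (fdim A) \<Longrightarrow> F2_isomorphic A B' \<Longrightarrow> v \<le> hull_points (fdim A) B'"
  shows "fvol A = v"
  unfolding fvol_def using assms by (intro Least_equality) auto

text \<open>A finite set of integers is determined up to Freiman isomorphism by which additive
  quadruples hold among its elements, listed in increasing order; so for fixed cardinality
  there are only finitely many volumes.\<close>
definition addition_pattern :: "int set \<Rightarrow> (nat \<times> nat \<times> nat \<times> nat) set" where
  "addition_pattern A = {(i, j, l, m). i < card A \<and> j < card A \<and> l < card A \<and> m < card A \<and>
     sorted_list_of_set A ! i + sorted_list_of_set A ! j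
       = sorted_list_of_set A ! l + sorted_list_of_set A ! m}"

lemma F2_isomorphic_if_same_pattern:
  assumes "finite A" "finite A'" "card A = card A'" "addition_pattern A = addition_pattern A'"
  shows "F2_isomorphic A A'"
proof -
  define xs where "xs = sorted_list_of_set A"
  define ys where "ys = sorted_list_of_set A'"
  have bx: "bij_betw ((!) xs) {..<card A} A"
    using bij_betw_nth[of xs] assms(1) unfolding xs_def by auto
  have "bij_betw ((!) ys) {..<card A} A'"
    using bij_betw_nth[of ys] assms(2,3) unfolding ys_def by auto
  let ?h = "inv_into {..<card A} ((!) xs)"
  have bh: "bij_betw ?h A {..<card A}" using bx by (rule bij_betw_inv_into)
  have h: "xs ! ?h x = x" "?h x < card A" if "x \<in> A" for x
    using bx bh that by (auto simp: bij_betw_inv_into_right dest: bij_betw_apply)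
  show ?thesis unfolding F2_isomorphic_def
  proof (intro exI conjI ballI)
    show "bij_betw ((!) ys \<circ> ?h) A A'" using bh \<open>bij_betw ((!) ys) _ A'\<close> by (rule bij_betw_trans)
    fix x y z t assume "x \<in> A" "y \<in> A" "z \<in> A" "t \<in> A"
    then have "x + y = z + t \<longleftrightarrow> (?h x, ?h y, ?h z, ?h t) \<in> addition_pattern A"
          and "(?h x, ?h y, ?h z, ?h t) \<in> addition_pattern A' \<longleftrightarrow>
                 ys ! ?h x + ys ! ?h y = ys ! ?h z + ys ! ?h t"
      using h assms(3) unfolding addition_pattern_def xs_def ys_def by auto
    then show "x + y = z + t \<longleftrightarrow>
        ((!) ys \<circ> ?h) x + ((!) ys \<circ> ?h) y = ((!) ys \<circ> ?h) z + ((!) ys \<circ> ?h) t"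
      using assms(4) by simp
  qed
qed

lemma finite_fvol_of_card: "finite {fvol A | A :: int set. finite A \<and> card A = k}"
proof -
  let ?U = "{..<k} \<times> {..<k} \<times> {..<k} \<times> {..<k}"
  let ?rep = "\<lambda>P. SOME A :: int set. finite A \<and> card A = k \<and> addition_pattern A = P"
  have "{fvol A | A :: int set. finite A \<and> card A = k} \<subseteq> (fvol \<circ> ?rep) ` Pow ?U"
  proof
    fix v assume "v \<in> {fvol A | A :: int set. finite A \<and> card A = k}"
    then obtain A :: "int set" where A: "finite A" "card A = k" and v: "v = fvol A" by blast
    have "finite (?rep (addition_pattern A)) \<and> card (?rep (addition_pattern A)) = k \<and>
          addition_pattern (?rep (addition_pattern A)) = addition_pattern A"
      by (rule someI[of _ A]) (use A in auto)
    then have "fvol A = fvol (?rep (addition_pattern A))"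
      using A by (metis F2_isomorphic_if_same_pattern F2_isomorphic_fvol_eq)
    moreover have "addition_pattern A \<in> Pow ?U" using A unfolding addition_pattern_def by auto
    ultimately show "v \<in> (fvol \<circ> ?rep) ` Pow ?U" using v by auto
  qed
  then show ?thesis by (rule finite_subset) simp
qed

lemma fvol_le_vol_max:
  fixes A :: "int set"
  assumes "A \<subseteq> {0..}" "finite A"
  shows "fvol A \<le> vol_max (card A) (card (sumset A A)) (fdim A)"
  unfolding vol_max_def
proof (rule cSup_upper)
  show "bdd_above {fvol A' | A' :: int set. A' \<subseteq> {0..} \<and> finite A' \<and> card A' = card A \<and>
      card (sumset A' A') = card (sumset A A) \<and> fdim A' = fdim A}"
    by (rule bdd_above_finite, rule finite_subset[OF _ finite_fvol_of_card[of "card A"]]) blast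
  show "fvol A \<in> {fvol A' | A' :: int set. A' \<subseteq> {0..} \<and> finite A' \<and> card A' = card A \<and>
      card (sumset A' A') = card (sumset A A) \<and> fdim A' = fdim A}"
    using assms by (intro CollectI exI[of _ A]) simp
qed

section \<open>Lattice points in convex hulls\<close>

lemma vec2_add [simp]: "vec2 a b + vec2 c d = vec2 (a + c) (b + d)"
  by (simp add: vec2_def fun_eq_iff)

lemma vec2_eq_iff [simp]: "vec2 a b = vec2 c d \<longleftrightarrow> a = c \<and> b = d"
proof
  assume "vec2 a b = vec2 c d"
  then have "vec2 a b 0 = vec2 c d 0" "vec2 a b 1 = vec2 c d 1" by simp_all
  then show "a = c \<and> b = d" by (simp add: vec2_def)
qed simp

lemma vec2_in_lattice: "vec2 a b \<in> lattice 2" "vec2 a 0 \<in> lattice 1"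
  by (auto simp: vec2_def lattice_def)

lemma lattice_1_eq_vec2: "p \<in> lattice 1 \<Longrightarrow> p = vec2 (p 0) 0"
  by (auto simp: vec2_def lattice_def fun_eq_iff)

lemma lattice_2_eq_vec2: "p \<in> lattice 2 \<Longrightarrow> p = vec2 (p 0) (p 1)"
  by (auto simp: vec2_def lattice_def fun_eq_iff)

lemma in_conv_linear_le:
  assumes "in_conv B p" "\<And>b. b \<in> B \<Longrightarrow> (\<Sum>i\<in>I. c i * real_of_int (b i)) \<le> r"
  shows "(\<Sum>i\<in>I. c i * real_of_int (p i)) \<le> r"
proof -
  obtain u where u0: "\<forall>b\<in>B. u b \<ge> 0" and u1: "(\<Sum>b\<in>B. u b) = 1"
    and up: "\<forall>i. (\<Sum>b\<in>B. u b * real_of_int (b i)) = real_of_int (p i)"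
    using assms(1) unfolding in_conv_def by blast
  have "(\<Sum>i\<in>I. c i * real_of_int (p i)) = (\<Sum>i\<in>I. c i * (\<Sum>b\<in>B. u b * real_of_int (b i)))"
    using up by simp
  also have "\<dots> = (\<Sum>b\<in>B. u b * (\<Sum>i\<in>I. c i * real_of_int (b i)))"
    by (simp add: sum_distrib_left sum.swap[of _ I] algebra_simps)
  also have "\<dots> \<le> (\<Sum>b\<in>B. u b * r)"
    by (rule sum_mono) (use u0 assms(2) in \<open>simp add: mult_left_mono\<close>)
  also have "\<dots> = r" using u1 by (simp add: sum_distrib_right[symmetric])
  finally show ?thesis .
qed

lemma in_conv_coord_le:
  assumes "in_conv B p" "\<And>b. b \<in> B \<Longrightarrow> b i \<le> r"
  shows "p i \<le> r"
  using in_conv_linear_le[OF assms(1), where I="{i}" and c="\<lambda>_. 1" and r=r] assms(2) by simp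

lemma in_conv_coord_ge:
  assumes "in_conv B p" "\<And>b. b \<in> B \<Longrightarrow> r \<le> b i"
  shows "r \<le> p i"
  using in_conv_linear_le[OF assms(1), where I="{i}" and c="\<lambda>_. -1" and r="- r"] assms(2)
  by simp

lemma in_conv_segment:
  fixes \<alpha> :: real
  assumes "finite B" "q \<in> B" "r \<in> B" "0 \<le> \<alpha>" "\<alpha> \<le> 1"
    and "\<And>i. real_of_int (p i) = \<alpha> * q i + (1 - \<alpha>) * r i"
  shows "in_conv B p"
proof -
  define u where "u c = (if c = q then \<alpha> else 0) + (if c = r then 1 - \<alpha> else 0)" for c
  have sum_u: "(\<Sum>c\<in>B. u c * f c) = \<alpha> * f q + (1 - \<alpha>) * f r" for f :: "(nat \<Rightarrow> int) \<Rightarrow> real"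
    using assms(1-3)
    by (simp add: u_def distrib_right sum.distrib if_distrib[of "\<lambda>x. x * _"] cong: if_cong)
  show ?thesis unfolding in_conv_def
  proof (intro exI[of _ u] conjI allI ballI)
    show "0 \<le> u c" for c using assms(4,5) by (simp add: u_def)
    show "sum u B = 1" using sum_u[of "\<lambda>_. 1"] by simp
    show "(\<Sum>c\<in>B. u c * real_of_int (c i)) = real_of_int (p i)" for i
      using sum_u[of "\<lambda>c. real_of_int (c i)"] assms(6) by simp
  qed
qed

lemma in_conv_member: "finite B \<Longrightarrow> b \<in> B \<Longrightarrow> in_conv B b"
  by (rule in_conv_segment[of B b b 1]) simp_all

lemma finite_hull_lattice_points:
  assumes "finite B"
  shows "finite {p \<in> lattice d. in_conv B p}"
proof -
  define M where "M = (\<Sum>b\<in>B. \<Sum>i<d. \<bar>b i\<bar>)"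
  have bound: "\<bar>b i\<bar> \<le> M" if "b \<in> B" "i < d" for b i
  proof -
    have "\<bar>b i\<bar> \<le> (\<Sum>i<d. \<bar>b i\<bar>)" using that by (intro member_le_sum) auto
    also have "\<dots> \<le> M" unfolding M_def using that assms
      by (intro member_le_sum) (auto intro: sum_nonneg)
    finally show ?thesis .
  qed
  let ?S = "{p \<in> lattice d. in_conv B p}"
  let ?coords = "\<lambda>p. map p [0..<d]"
  have "?coords p \<in> {xs. set xs \<subseteq> {-M..M} \<and> length xs = d}" if "p \<in> ?S" for p
  proof -
    have conv: "in_conv B p" using that by simp
    have "- M \<le> p i" "p i \<le> M" if "i < d" for i
      using in_conv_coord_ge[OF conv, of "- M" i] in_conv_coord_le[OF conv, of i M] bound[OF _ that]
      by fastforce+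
    then show ?thesis by auto
  qed
  then have "?coords ` ?S \<subseteq> {xs. set xs \<subseteq> {-M..M} \<and> length xs = d}" by blast
  then have "finite (?coords ` ?S)"
    by (rule finite_subset) (rule finite_lists_length_eq, simp)
  moreover have "inj_on ?coords ?S"
  proof (rule inj_onI, rule ext)
    fix p q i assume "p \<in> ?S" "q \<in> ?S" "?coords p = ?coords q"
    then show "p i = q i"
      by (cases "i < d") (auto simp: lattice_def dest: map_eq_imp_length_eq nth_map_upt)
  qed
  ultimately show ?thesis using finite_imageD by blast
qed

lemma card_le_hull_points:
  assumes "finite B" "B \<subseteq> lattice d"
  shows "card B \<le> hull_points d B"
  unfolding hull_points_def
  by (rule card_mono[OF finite_hull_lattice_points[OF assms(1)]])
     (use assms in_conv_member in blast)

lemma hull_points_ge_card: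
  assumes "finite A" "B \<subseteq> lattice d" "F2_isomorphic A B"
  shows "card A \<le> hull_points d B"
proof -
  obtain \<phi> where "bij_betw \<phi> A B" using assms(3) by (blast elim: F2_isomorphicE)
  then have "card B = card A" "finite B"
    using assms(1) by (auto simp: bij_betw_same_card bij_betw_finite)
  then show ?thesis using card_le_hull_points assms(2) by metis
qed

lemma hull_points_1_ge:
  assumes "finite B" "B \<subseteq> lattice 1" "q \<in> B" "r \<in> B"
  shows "nat \<bar>r 0 - q 0\<bar> + 1 \<le> hull_points 1 B"
proof -
  have ordered: "nat (r 0 - q 0) + 1 \<le> hull_points 1 B"
    if qr: "q \<in> B" "r \<in> B" and le: "q 0 \<le> r 0" for q r
  proof -
    have in_hull: "in_conv B (vec2 z 0)" if "q 0 \<le> z" "z \<le> r 0" for z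
    proof (rule in_conv_segment[OF assms(1) qr])
      \<comment> \<open>if \<open>q 0 = r 0\<close>, division by zero gives \<open>\<alpha> = 0\<close>, which still works\<close>
      define \<alpha> :: real where "\<alpha> = (r 0 - z) / (r 0 - q 0)"
      show "0 \<le> \<alpha>" using that unfolding \<alpha>_def by simp
      show "\<alpha> \<le> 1" using that unfolding \<alpha>_def by (auto simp: divide_le_eq_1)
      have "\<alpha> * (r 0 - q 0) = r 0 - z"
        using that by (cases "q 0 = r 0") (auto simp: \<alpha>_def)
      then have z: "z = \<alpha> * q 0 + (1 - \<alpha>) * r 0" by (simp add: algebra_simps)
      have "q i = 0" "r i = 0" if "i \<noteq> 0" for i
        using assms(2) qr that by (auto simp: lattice_def)
      then show "real_of_int (vec2 z 0 i) = \<alpha> * q i + (1 - \<alpha>) * r i" for i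
        using z by (simp add: vec2_def)
    qed
    have "card {q 0..r 0} = card ((\<lambda>z. vec2 z 0) ` {q 0..r 0})"
      by (rule card_image[symmetric]) (simp add: inj_on_def)
    also have "\<dots> \<le> hull_points 1 B" unfolding hull_points_def
      by (rule card_mono[OF finite_hull_lattice_points[OF assms(1)]])
         (use in_hull vec2_in_lattice in auto)
    finally show ?thesis using le by simp
  qed
  show ?thesis
    using ordered[OF assms(3,4)] ordered[OF assms(4,3)] by (cases "q 0 \<le> r 0") auto
qed

lemma hull_points_1_le:
  assumes "X \<subseteq> {a..b}"
  shows "hull_points 1 ((\<lambda>z. vec2 z 0) ` X) \<le> nat (b - a + 1)"
proof -
  have "{p \<in> lattice 1. in_conv ((\<lambda>z. vec2 z 0) ` X) p} \<subseteq> (\<lambda>z. vec2 z 0) ` {a..b}"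
  proof clarify
    fix p assume p: "p \<in> lattice 1" "in_conv ((\<lambda>z. vec2 z 0) ` X) p"
    have bounds: "a \<le> c 0" "c 0 \<le> b" if "c \<in> (\<lambda>z. vec2 z 0) ` X" for c
      using that assms by (auto simp: vec2_def)
    have "a \<le> p 0" by (rule in_conv_coord_ge[OF p(2)]) (rule bounds)
    moreover have "p 0 \<le> b" by (rule in_conv_coord_le[OF p(2)]) (rule bounds)
    ultimately show "p \<in> (\<lambda>z. vec2 z 0) ` {a..b}" using lattice_1_eq_vec2[OF p(1)] by auto
  qed
  then have "hull_points 1 ((\<lambda>z. vec2 z 0) ` X) \<le> card ((\<lambda>z. vec2 z 0) ` {a..b})"
    unfolding hull_points_def by (intro card_mono) auto
  also have "\<dots> \<le> nat (b - a + 1)" using card_image_le[of "{a..b}"] by simp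
  finally show ?thesis .
qed

definition two_rows :: "nat \<Rightarrow> nat \<Rightarrow> (nat \<Rightarrow> int) set" where
  "two_rows k1 k2 = {vec2 x 0 | x. 0 \<le> x \<and> x < int k1} \<union> {vec2 x 1 | x. 0 \<le> x \<and> x < int k2}"

lemma two_rows_eq_image:
  "two_rows k1 k2 = (\<lambda>x. vec2 x 0) ` {0..<int k1} \<union> (\<lambda>x. vec2 x 1) ` {0..<int k2}"
  unfolding two_rows_def by auto

lemma two_rows_subset_lattice: "two_rows k1 k2 \<subseteq> lattice 2"
  unfolding two_rows_def using vec2_in_lattice by blast

lemma finite_two_rows: "finite (two_rows k1 k2)"
  unfolding two_rows_eq_image by simp

lemma card_two_rows: "card (two_rows k1 k2) = k1 + k2"
  unfolding two_rows_eq_image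
  by (subst card_Un_disjoint) (auto simp: card_image inj_on_def)

lemma hull_points_two_rows: "hull_points 2 (two_rows k1 k2) = k1 + k2"
proof -
  let ?M = "two_rows k1 k2"
  have "p \<in> ?M" if p: "p \<in> lattice 2" "in_conv ?M p" for p
  proof -
    have "0 \<le> p 1" by (rule in_conv_coord_ge[OF p(2)]) (auto simp: two_rows_def vec2_def)
    moreover have "p 1 \<le> 1" by (rule in_conv_coord_le[OF p(2)]) (auto simp: two_rows_def vec2_def)
    moreover have "0 \<le> p 0" by (rule in_conv_coord_ge[OF p(2)]) (auto simp: two_rows_def vec2_def)
    \<comment> \<open>the line through the last points of both rows\<close>
    moreover have "(\<Sum>i\<in>{0,1}. (if i = 0 then 1 else real k1 - real k2) * real_of_int (p i))
        \<le> real k1 - 1"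
      by (rule in_conv_linear_le[OF p(2)]) (auto simp: two_rows_def vec2_def)
    then have "real_of_int (p 0) \<le> real_of_int (int k1 - 1 + (int k2 - int k1) * p 1)"
      by (simp add: algebra_simps)
    then have "p 0 \<le> int k1 - 1 + (int k2 - int k1) * p 1" by (simp only: of_int_le_iff)
    moreover have "p 1 = 0 \<or> p 1 = 1" using \<open>0 \<le> p 1\<close> \<open>p 1 \<le> 1\<close> by linarith
    ultimately have "p 1 = 0 \<and> p 0 < int k1 \<or> p 1 = 1 \<and> p 0 < int k2" by auto
    then show ?thesis
      using lattice_2_eq_vec2[OF p(1)] \<open>0 \<le> p 0\<close> unfolding two_rows_def by force
  qed
  then have "hull_points 2 ?M \<le> card ?M"
    unfolding hull_points_def by (intro card_mono finite_two_rows) auto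
  moreover have "card ?M \<le> hull_points 2 ?M"
    by (rule card_le_hull_points[OF finite_two_rows two_rows_subset_lattice])
  ultimately show ?thesis using card_two_rows by simp
qed

section \<open>Sets contained in hyperplanes\<close>

lemma of_int_fun_apply [simp]: "(of_int n :: 'a \<Rightarrow> 'b::ring_1) x = of_int n"
  by (cases n rule: int_cases) (simp_all add: of_nat_fun)

lemma in_hyperplane_if_orthogonal:
  fixes a P v w :: "nat \<Rightarrow> int"
  assumes "\<exists>i<d. a i \<noteq> 0" "(\<Sum>i<d. a i * v i) = 0" "(\<Sum>i<d. a i * w i) = 0"
    and "\<And>b. b \<in> B \<Longrightarrow> \<exists>s t. b = P + of_int s * v + of_int t * w"
  shows "in_hyperplane d B"
  unfolding in_hyperplane_def
proof (intro exI[of _ "\<lambda>i. of_int (a i)"] exI[of _ "of_int (\<Sum>i<d. a i * P i)"] conjI ballI)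
  show "\<exists>i<d. real_of_int (a i) \<noteq> 0" using assms(1) by simp
  fix b assume "b \<in> B"
  then obtain s t where "b = P + of_int s * v + of_int t * w" using assms(4) by blast
  then have "(\<Sum>i<d. a i * b i)
      = (\<Sum>i<d. a i * P i) + s * (\<Sum>i<d. a i * v i) + t * (\<Sum>i<d. a i * w i)"
    by (simp add: algebra_simps sum.distrib sum_distrib_left)
  then have "real_of_int (\<Sum>i<d. a i * b i) = real_of_int (\<Sum>i<d. a i * P i)"
    using assms(2,3) by simp
  then show "(\<Sum>i<d. real_of_int (a i) * real_of_int (b i)) = real_of_int (\<Sum>i<d. a i * P i)"
    by simp
qed

lemma sum_lessThan_supported:
  fixes a :: "nat \<Rightarrow> 'a::comm_semiring_0"
  assumes "m \<le> d" "\<And>i. m \<le> i \<Longrightarrow> a i = 0"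
  shows "(\<Sum>i<d. a i * v i) = (\<Sum>i<m. a i * v i)"
  by (rule sum.mono_neutral_right) (use assms in auto)

lemma in_hyperplane_line:
  fixes P v :: "nat \<Rightarrow> int"
  assumes "2 \<le> d" "\<And>b. b \<in> B \<Longrightarrow> \<exists>s. b = P + of_int s * v"
  shows "in_hyperplane d B"
proof -
  define a :: "nat \<Rightarrow> int" where
    "a = (if v 0 = 0 \<and> v 1 = 0 then vec2 1 0 else vec2 (v 1) (- v 0))"
  have "a 0 \<noteq> 0 \<or> a 1 \<noteq> 0" and orth: "a 0 * v 0 + a 1 * v 1 = 0"
    by (auto simp: a_def vec2_def)
  moreover have "0 < d" "1 < d" using assms(1) by auto
  ultimately have nonzero: "\<exists>i<d. a i \<noteq> 0" by blast
  have "(\<Sum>i<d. a i * u i) = a 0 * u 0 + a 1 * u 1" for u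
    using sum_lessThan_supported[OF assms(1), of a u]
    by (simp add: a_def vec2_def numeral_2_eq_2)
  then show ?thesis
    using nonzero orth assms(2) by (intro in_hyperplane_if_orthogonal[where w = 0]) auto
qed

lemma int_orthogonal_to_two:
  fixes v0 v1 v2 w0 w1 w2 :: int
  obtains a0 a1 a2 where "a0 \<noteq> 0 \<or> a1 \<noteq> 0 \<or> a2 \<noteq> 0"
    "a0 * v0 + a1 * v1 + a2 * v2 = 0" "a0 * w0 + a1 * w1 + a2 * w2 = 0"
proof -
  \<comment> \<open>the cross product, or, if it vanishes, a vector orthogonal to the nonzero one of \<open>v\<close>, \<open>w\<close>\<close>
  define c0 c1 c2 where "c0 = v1 * w2 - v2 * w1" and "c1 = v2 * w0 - v0 * w2"
    and "c2 = v0 * w1 - v1 * w0"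
  consider "c0 \<noteq> 0 \<or> c1 \<noteq> 0 \<or> c2 \<noteq> 0"
    | "c1 = 0" "c2 = 0" "v0 \<noteq> 0 \<or> v1 \<noteq> 0"
    | "c1 = 0" "v0 = 0" "v1 = 0" "v2 \<noteq> 0"
    | "v0 = 0" "v1 = 0" "v2 = 0" "w0 \<noteq> 0 \<or> w1 \<noteq> 0"
    | "v0 = 0" "v1 = 0" "v2 = 0" "w0 = 0" "w1 = 0" "w2 \<noteq> 0"
    | "v0 = 0" "v1 = 0" "v2 = 0" "w0 = 0" "w1 = 0" "w2 = 0"
    by blast
  then show thesis
  proof cases
    case 1
    then show ?thesis by (rule that) (simp_all add: c0_def c1_def c2_def algebra_simps)
  next
    case 2
    then show ?thesis by (intro that[of "v1" "- v0" 0]) (auto simp: c2_def algebra_simps)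
  next
    case 3
    then show ?thesis by (intro that[of "v2" 0 "- v0"]) (auto simp: c1_def algebra_simps)
  next
    case 4
    then show ?thesis by (intro that[of "w1" "- w0" 0]) (auto simp: algebra_simps)
  next
    case 5
    then show ?thesis by (intro that[of "w2" 0 "- w0"]) auto
  next
    case 6
    then show ?thesis by (intro that[of 1 0 0]) auto
  qed
qed

lemma in_hyperplane_plane:
  fixes P v w :: "nat \<Rightarrow> int"
  assumes "3 \<le> d" "\<And>b. b \<in> B \<Longrightarrow> \<exists>s t. b = P + of_int s * v + of_int t * w"
  shows "in_hyperplane d B"
proof -
  obtain a0 a1 a2 where "a0 \<noteq> 0 \<or> a1 \<noteq> 0 \<or> a2 \<noteq> 0"
    and orth: "a0 * v 0 + a1 * v 1 + a2 * v 2 = 0" "a0 * w 0 + a1 * w 1 + a2 * w 2 = 0"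
    by (rule int_orthogonal_to_two)
  define a :: "nat \<Rightarrow> int" where
    "a i = (if i = 0 then a0 else if i = 1 then a1 else if i = 2 then a2 else 0)" for i
  have "a 0 \<noteq> 0 \<or> a 1 \<noteq> 0 \<or> a 2 \<noteq> 0" using \<open>a0 \<noteq> 0 \<or> _\<close> by (simp add: a_def)
  moreover have "0 < d" "1 < d" "2 < d" using assms(1) by auto
  ultimately have nonzero: "\<exists>i<d. a i \<noteq> 0" by blast
  have "(\<Sum>i<d. a i * u i) = a0 * u 0 + a1 * u 1 + a2 * u 2" for u
    using sum_lessThan_supported[OF assms(1), of a u]
    by (simp add: a_def numeral_3_eq_3 numeral_2_eq_2)
  then show ?thesis
    using nonzero orth assms(2)
    by (intro in_hyperplane_if_orthogonal[where P = P and v = v and w = w]) auto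
qed

lemma not_in_hyperplane_two_rows:
  assumes "1 \<le> k1" "1 \<le> k2" "3 \<le> k1 + k2"
  shows "\<not> in_hyperplane 2 (two_rows k1 k2)"
proof
  assume "in_hyperplane 2 (two_rows k1 k2)"
  then obtain a c where nonzero: "\<exists>i<2. a i \<noteq> (0::real)"
    and sums: "\<forall>b\<in>two_rows k1 k2. (\<Sum>i<2. a i * real_of_int (b i)) = c"
    unfolding in_hyperplane_def by blast
  have on_plane: "a 0 * b 0 + a 1 * b 1 = c" if "b \<in> two_rows k1 k2" for b
    using sums that by (simp add: numeral_2_eq_2)
  have "vec2 0 0 \<in> two_rows k1 k2" "vec2 0 1 \<in> two_rows k1 k2"
    using assms(1,2) by (auto simp: two_rows_def)
  then have "c = 0" using on_plane[of "vec2 0 0"] by (simp add: vec2_def)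
  then have "a 1 = 0" using on_plane[of "vec2 0 1"] \<open>vec2 0 1 \<in> _\<close> by (simp add: vec2_def)
  have "vec2 1 0 \<in> two_rows k1 k2 \<or> vec2 1 1 \<in> two_rows k1 k2"
    using assms by (auto simp: two_rows_def)
  then have "a 0 = 0"
    using on_plane[of "vec2 1 0"] on_plane[of "vec2 1 1"] \<open>c = 0\<close> \<open>a 1 = 0\<close>
    by (auto simp: vec2_def)
  then show False using nonzero \<open>a 1 = 0\<close> less_2_cases by auto
qed

lemma F2_isomorphic_line_embedding: "F2_isomorphic X ((\<lambda>z. vec2 z 0) ` X)"
  by (rule F2_isomorphic_imageI) (auto simp: inj_on_def)

lemma not_in_hyperplane_line_embedding:
  assumes "x \<in> X" "y \<in> X" "x \<noteq> y"
  shows "\<not> in_hyperplane 1 ((\<lambda>z. vec2 z 0) ` X)"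
proof
  assume "in_hyperplane 1 ((\<lambda>z. vec2 z 0) ` X)"
  then obtain a c where "a 0 \<noteq> 0" "\<And>z. z \<in> X \<Longrightarrow> a 0 * real_of_int z = c"
    unfolding in_hyperplane_def by (auto simp: vec2_def)
  then show False using assms by (metis mult_cancel_left of_int_eq_iff)
qed

section \<open>Unions of two segments\<close>

lemma affine_if_constant_step:
  fixes \<phi> :: "int \<Rightarrow> 'a::ring_1"
  assumes "\<And>x. a \<le> x \<Longrightarrow> x < c \<Longrightarrow> \<phi> (x + 1) = \<phi> x + v" "a \<le> x" "x \<le> c"
  shows "\<phi> x = \<phi> a + of_int (x - a) * v"
proof -
  have "x \<le> c \<longrightarrow> \<phi> x = \<phi> a + of_int (x - a) * v"
    using assms(2)
  proof (induction x rule: int_ge_induct)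
    case (step x)
    then show ?case using assms(1)[of x] by (simp add: algebra_simps)
  qed simp
  then show ?thesis using assms(3) by blast
qed

locale two_segments =
  fixes A :: "int set" and a1 b1 a2 b2 :: int
  assumes A_eq: "A = {a1..b1} \<union> {a2..b2}"
    and a1_le_b1: "a1 \<le> b1" and gap_pos: "b1 + 1 < a2" and a2_le_b2: "a2 \<le> b2"
    and nontrivial: "a1 < b1 \<or> a2 < b2"
begin

abbreviation gap :: int where "gap \<equiv> a2 - b1 - 1"

lemma finite_A: "finite A"
  by (simp add: A_eq)

lemma card_A: "int (card A) = (b1 - a1) + (b2 - a2) + 2"
  using a1_le_b1 gap_pos a2_le_b2 unfolding A_eq by (subst card_Un_disjoint) auto

lemma sumset_A:
  "sumset A A = {2*a1..2*b2} - ({2*b1+1..a1+a2-1} \<union> {b1+b2+1..2*a2-1})"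
proof (rule set_eqI)
  fix s
  have "(\<exists>x\<in>A. \<exists>y\<in>A. s = x + y) \<longleftrightarrow>
      s \<in> {2*a1..2*b2} - ({2*b1+1..a1+a2-1} \<union> {b1+b2+1..2*a2-1})"
  proof
    assume "\<exists>x\<in>A. \<exists>y\<in>A. s = x + y"
    then show "s \<in> {2*a1..2*b2} - ({2*b1+1..a1+a2-1} \<union> {b1+b2+1..2*a2-1})"
      using a1_le_b1 gap_pos a2_le_b2 unfolding A_eq by auto
  next
    assume s: "s \<in> {2*a1..2*b2} - ({2*b1+1..a1+a2-1} \<union> {b1+b2+1..2*a2-1})"
    consider "s \<le> 2*b1" | "2*b1 < s" "s \<le> b1 + b2" | "b1 + b2 < s" by linarith
    then show "\<exists>x\<in>A. \<exists>y\<in>A. s = x + y"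
    proof cases
      case 1
      then show ?thesis using s a1_le_b1 unfolding A_eq
        by (intro bexI[of _ "s div 2"] bexI[of _ "s - s div 2", where A = "{a1..b1} \<union> _"]) auto
    next
      case 2
      then show ?thesis using s a1_le_b1 gap_pos a2_le_b2 unfolding A_eq
        by (intro bexI[of _ "max a1 (s - b2)"]
            bexI[of _ "s - max a1 (s - b2)", where A = "{a1..b1} \<union> _"]) auto
    next
      case 3
      then show ?thesis using s gap_pos a2_le_b2 unfolding A_eq
        by (intro bexI[of _ "s div 2"] bexI[of _ "s - s div 2", where A = "{a1..b1} \<union> _"]) auto
    qed
  qed
  then show "s \<in> sumset A A \<longleftrightarrow> s \<in> {2*a1..2*b2} - ({2*b1+1..a1+a2-1} \<union> {b1+b2+1..2*a2-1})"
    unfolding sumset_def by blast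
qed

lemma card_sumset_A:
  "int (card (sumset A A))
     = 2 * int (card A) - 1 + 2 * gap - max 0 (gap - (b1 - a1)) - max 0 (gap - (b2 - a2))"
proof -
  let ?holes = "{2*b1+1..a1+a2-1} \<union> {b1+b2+1..2*a2-1}"
  have sub: "?holes \<subseteq> {2*a1..2*b2}" using a1_le_b1 gap_pos a2_le_b2 by auto
  have "card ?holes = card {2*b1+1..a1+a2-1} + card {b1+b2+1..2*a2-1}"
    using a1_le_b1 gap_pos a2_le_b2 by (intro card_Un_disjoint) auto
  then have "int (card ?holes) = max 0 (gap - (b1 - a1)) + max 0 (gap - (b2 - a2))"
    by simp
  moreover have "card (sumset A A) = card {2*a1..2*b2} - card ?holes"
    unfolding sumset_A using sub by (intro card_Diff_subset) (auto intro: finite_subset)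
  moreover have "card ?holes \<le> card {2*a1..2*b2}" using sub by (intro card_mono) auto
  ultimately show ?thesis using card_A a1_le_b1 gap_pos a2_le_b2 by simp
qed

lemma card_sumset_long_gap:
  assumes "max (b1 - a1) (b2 - a2) \<le> gap"
  shows "card (sumset A A) = 3 * card A - 3"
  using card_sumset_A card_A assms by (auto simp: max_def split: if_split_asm)

lemma card_sumset_point_segment:
  assumes "gap < max (b1 - a1) (b2 - a2)" "a1 = b1 \<or> a2 = b2"
  shows "card (sumset A A) = 2 * card A - 1 + nat gap"
  using card_sumset_A card_A assms a1_le_b1 gap_pos a2_le_b2
  by (auto simp: max_def split: if_split_asm)

lemma F2_hom_affine_on_segments:
  fixes \<phi> :: "int \<Rightarrow> 'a::ring_1"
  assumes "F2_hom \<phi> A"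
  obtains v where "\<And>x. x \<in> {a1..b1} \<Longrightarrow> \<phi> x = \<phi> a1 + of_int (x - a1) * v"
    and "\<And>x. x \<in> {a2..b2} \<Longrightarrow> \<phi> x = \<phi> a2 + of_int (x - a2) * v"
proof -
  define x0 where "x0 = (if a2 < b2 then a2 else a1)"
  have x0: "x0 \<in> A" "x0 + 1 \<in> A" using nontrivial a1_le_b1 unfolding x0_def A_eq by auto
  define v where "v = \<phi> (x0 + 1) - \<phi> x0"
  have "\<phi> (x + 1) = \<phi> x + v" if "x \<in> A" "x + 1 \<in> A" for x
    using F2_homD[OF assms that(1) x0(2) that(2) x0(1)] by (simp add: v_def algebra_simps)
  then show thesis
    by (intro that[of v]; rule affine_if_constant_step) (auto simp: A_eq)
qed

lemma F2_hom_affine_if_short_gap: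
  fixes \<phi> :: "int \<Rightarrow> 'a::ring_1"
  assumes "F2_hom \<phi> A" "gap < max (b1 - a1) (b2 - a2)"
  obtains v where "\<And>x. x \<in> A \<Longrightarrow> \<phi> x = \<phi> a1 + of_int (x - a1) * v"
proof -
  obtain v where v1: "\<And>x. x \<in> {a1..b1} \<Longrightarrow> \<phi> x = \<phi> a1 + of_int (x - a1) * v"
    and v2: "\<And>x. x \<in> {a2..b2} \<Longrightarrow> \<phi> x = \<phi> a2 + of_int (x - a2) * v"
    using F2_hom_affine_on_segments[OF assms(1)] by blast
  \<comment> \<open>a short gap lets an additive quadruple straddle it, which links the two segments\<close>
  have a2: "\<phi> a2 = \<phi> a1 + of_int (a2 - a1) * v"
  proof (cases "gap < b2 - a2")
    case True
    have "\<phi> b1 + \<phi> (2*a2 - b1) = \<phi> a2 + \<phi> a2"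
      by (rule F2_homD[OF assms(1)]) (use True a1_le_b1 gap_pos a2_le_b2 in \<open>auto simp: A_eq\<close>)
    then show ?thesis
      using v1[of b1] v2[of "2*a2 - b1"] True a1_le_b1 gap_pos by (simp add: algebra_simps)
  next
    case False
    with assms(2) have "gap < b1 - a1" by linarith
    have "\<phi> a2 + \<phi> (2*b1 - a2) = \<phi> b1 + \<phi> b1"
      by (rule F2_homD[OF assms(1)])
         (use \<open>gap < b1 - a1\<close> a1_le_b1 gap_pos a2_le_b2 in \<open>auto simp: A_eq\<close>)
    then have "\<phi> a2 = \<phi> b1 + \<phi> b1 - \<phi> (2*b1 - a2)" by (simp add: eq_diff_eq)
    also have "\<dots> = \<phi> a1 + of_int (a2 - a1) * v"
    proof -
      have b1: "\<phi> b1 = \<phi> a1 + of_int (b1 - a1) * v" using v1[of b1] a1_le_b1 by simp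
      have m: "\<phi> (2*b1 - a2) = \<phi> a1 + of_int (2*b1 - a2 - a1) * v"
        using v1[of "2*b1 - a2"] \<open>gap < b1 - a1\<close> gap_pos by simp
      show ?thesis unfolding b1 m by (simp add: algebra_simps mult_2)
    qed
    finally show ?thesis .
  qed
  show thesis
  proof (rule that)
    fix x assume "x \<in> A"
    then consider "x \<in> {a1..b1}" | "x \<in> {a2..b2}" by (auto simp: A_eq)
    then show "\<phi> x = \<phi> a1 + of_int (x - a1) * v"
    proof cases
      case 1
      then show ?thesis by (rule v1)
    next
      case 2
      then show ?thesis unfolding v2[OF 2] a2 by (simp add: algebra_simps)
    qed
  qed
qed

text \<open>With a long gap, sums of two elements of the first segment, of one element from each
  segment, and of two elements of the second segment lie in disjoint ranges.\<close>
lemma F2_isomorphic_two_rows: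
  assumes "max (b1 - a1) (b2 - a2) \<le> gap"
  shows "F2_isomorphic A (two_rows (nat (b1 - a1 + 1)) (nat (b2 - a2 + 1)))"
proof -
  define row :: "int \<Rightarrow> int" where "row x = (if x \<le> b1 then 0 else 1)" for x
  define offset where "offset x = (if x \<le> b1 then x - a1 else x - a2)" for x
  define \<psi> where "\<psi> x = vec2 (offset x) (row x)" for x
  have "F2_isomorphic A (\<psi> ` A)"
  proof (rule F2_isomorphic_imageI)
    show "inj_on \<psi> A" by (auto simp: inj_on_def \<psi>_def row_def offset_def split: if_splits)
    fix x y z t assume "x \<in> A" "y \<in> A" "z \<in> A" "t \<in> A"
    then have "x + y = z + t \<longleftrightarrow>
        offset x + offset y = offset z + offset t \<and> row x + row y = row z + row t"
      using assms a1_le_b1 gap_pos a2_le_b2 unfolding row_def offset_def A_eq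
      by (auto split: if_split_asm)
    then show "x + y = z + t \<longleftrightarrow> \<psi> x + \<psi> y = \<psi> z + \<psi> t" by (simp add: \<psi>_def)
  qed
  moreover have "\<psi> ` A = two_rows (nat (b1 - a1 + 1)) (nat (b2 - a2 + 1))"
  proof
    show "\<psi> ` A \<subseteq> two_rows (nat (b1 - a1 + 1)) (nat (b2 - a2 + 1))"
      using gap_pos by (auto simp: \<psi>_def row_def offset_def A_eq two_rows_def)
  next
    show "two_rows (nat (b1 - a1 + 1)) (nat (b2 - a2 + 1)) \<subseteq> \<psi> ` A"
    proof
      fix p assume "p \<in> two_rows (nat (b1 - a1 + 1)) (nat (b2 - a2 + 1))"
      then consider x where "p = vec2 x 0" "0 \<le> x" "x \<le> b1 - a1"
        | x where "p = vec2 x 1" "0 \<le> x" "x \<le> b2 - a2"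
        unfolding two_rows_def using a1_le_b1 a2_le_b2 by force
      then show "p \<in> \<psi> ` A"
      proof cases
        case (1 x)
        then have "p = \<psi> (x + a1)" "x + a1 \<in> A" by (auto simp: \<psi>_def row_def offset_def A_eq)
        then show ?thesis by blast
      next
        case (2 x)
        then have "p = \<psi> (x + a2)" "x + a2 \<in> A"
          using gap_pos by (auto simp: \<psi>_def row_def offset_def A_eq)
        then show ?thesis by blast
      qed
    qed
  qed
  ultimately show ?thesis by simp
qed

lemma in_hyperplane_if_F2_isomorphic:
  assumes "3 \<le> d" "F2_isomorphic A B"
  shows "in_hyperplane d B"
proof -
  obtain \<phi> :: "int \<Rightarrow> nat \<Rightarrow> int" where bij: "bij_betw \<phi> A B" and hom: "F2_hom \<phi> A"
    using assms(2) by (blast elim: F2_isomorphicE)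
  obtain v where v1: "\<And>x. x \<in> {a1..b1} \<Longrightarrow> \<phi> x = \<phi> a1 + of_int (x - a1) * v"
    and v2: "\<And>x. x \<in> {a2..b2} \<Longrightarrow> \<phi> x = \<phi> a2 + of_int (x - a2) * v"
    using F2_hom_affine_on_segments[OF hom] by blast
  show ?thesis
  proof (rule in_hyperplane_plane[OF assms(1), where P = "\<phi> a1" and v = v and w = "\<phi> a2 - \<phi> a1"])
    fix b assume "b \<in> B"
    then obtain x where x: "x \<in> A" "b = \<phi> x" using bij by (auto simp: bij_betw_def)
    show "\<exists>s t. b = \<phi> a1 + of_int s * v + of_int t * (\<phi> a2 - \<phi> a1)"
    proof (cases "x \<in> {a1..b1}")
      case True
      then show ?thesis using v1[OF True] x(2) by (intro exI[of _ "x - a1"] exI[of _ 0]) simp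
    next
      case False
      then have "x \<in> {a2..b2}" using x(1) by (auto simp: A_eq)
      from v2[OF this] x(2) show ?thesis by (intro exI[of _ "x - a2"] exI[of _ 1]) simp
    qed
  qed
qed

lemma fdim_long_gap:
  assumes "max (b1 - a1) (b2 - a2) \<le> gap"
  shows "fdim A = 2"
proof (rule fdim_eqI[OF two_rows_subset_lattice _ F2_isomorphic_two_rows[OF assms]])
  show "\<not> in_hyperplane 2 (two_rows (nat (b1 - a1 + 1)) (nat (b2 - a2 + 1)))"
    by (rule not_in_hyperplane_two_rows) (use a1_le_b1 a2_le_b2 nontrivial in auto)
qed (simp add: in_hyperplane_if_F2_isomorphic)

lemma fvol_long_gap:
  assumes "max (b1 - a1) (b2 - a2) \<le> gap"
  shows "fvol A = card A"
proof (rule fvol_eqI)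
  show "two_rows (nat (b1 - a1 + 1)) (nat (b2 - a2 + 1)) \<subseteq> lattice (fdim A)"
    using two_rows_subset_lattice by (simp add: fdim_long_gap[OF assms])
  show "hull_points (fdim A) (two_rows (nat (b1 - a1 + 1)) (nat (b2 - a2 + 1))) = card A"
    using card_A a1_le_b1 a2_le_b2 by (simp add: fdim_long_gap[OF assms] hull_points_two_rows)
qed (use F2_isomorphic_two_rows[OF assms] hull_points_ge_card finite_A in auto)

lemma in_hyperplane_if_F2_isomorphic_short_gap:
  assumes "gap < max (b1 - a1) (b2 - a2)" "2 \<le> d" "F2_isomorphic A B"
  shows "in_hyperplane d B"
proof -
  obtain \<phi> :: "int \<Rightarrow> nat \<Rightarrow> int" where bij: "bij_betw \<phi> A B" and hom: "F2_hom \<phi> A"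
    using assms(3) by (blast elim: F2_isomorphicE)
  obtain v where v: "\<And>x. x \<in> A \<Longrightarrow> \<phi> x = \<phi> a1 + of_int (x - a1) * v"
    using F2_hom_affine_if_short_gap[OF hom assms(1)] by blast
  show ?thesis
  proof (rule in_hyperplane_line[OF assms(2), where P = "\<phi> a1" and v = v])
    fix b assume "b \<in> B"
    then obtain x where "x \<in> A" "b = \<phi> x" using bij by (auto simp: bij_betw_def)
    then show "\<exists>s. b = \<phi> a1 + of_int s * v" using v by blast
  qed
qed

lemma fdim_short_gap:
  assumes "gap < max (b1 - a1) (b2 - a2)"
  shows "fdim A = 1"
proof (rule fdim_eqI[OF _ _ F2_isomorphic_line_embedding])
  show "(\<lambda>z. vec2 z 0) ` A \<subseteq> lattice 1" using vec2_in_lattice by blast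
  show "\<not> in_hyperplane 1 ((\<lambda>z. vec2 z 0) ` A)"
    by (rule not_in_hyperplane_line_embedding[of a1 _ b2])
       (use a1_le_b1 gap_pos a2_le_b2 in \<open>auto simp: A_eq\<close>)
qed (simp add: in_hyperplane_if_F2_isomorphic_short_gap[OF assms])

lemma hull_points_ge_short_gap:
  assumes "gap < max (b1 - a1) (b2 - a2)" "B \<subseteq> lattice 1" "F2_isomorphic A B"
  shows "card A + nat gap \<le> hull_points 1 B"
proof -
  obtain \<phi> :: "int \<Rightarrow> nat \<Rightarrow> int" where bij: "bij_betw \<phi> A B" and hom: "F2_hom \<phi> A"
    using assms(3) by (blast elim: F2_isomorphicE)
  obtain v where v: "\<And>x. x \<in> A \<Longrightarrow> \<phi> x = \<phi> a1 + of_int (x - a1) * v"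
    using F2_hom_affine_if_short_gap[OF hom assms(1)] by blast
  have ends: "a1 \<in> A" "b2 \<in> A" using a1_le_b1 gap_pos a2_le_b2 by (auto simp: A_eq)
  then have in_B: "\<phi> a1 \<in> B" "\<phi> b2 \<in> B" using bij by (auto dest: bij_betw_apply)
  have finite_B: "finite B" using bij_betw_finite[OF bij] finite_A by simp
  have "\<phi> a1 \<noteq> \<phi> b2"
  proof
    assume "\<phi> a1 = \<phi> b2"
    then have "a1 = b2" using inj_onD[OF bij_betw_imp_inj_on[OF bij] _ ends] by blast
    then show False using a1_le_b1 gap_pos a2_le_b2 by simp
  qed
  moreover have "\<phi> a1 = vec2 (\<phi> a1 0) 0" "\<phi> b2 = vec2 (\<phi> b2 0) 0"
    using in_B assms(2) lattice_1_eq_vec2 by blast+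
  ultimately have "\<phi> a1 0 \<noteq> \<phi> b2 0" by metis
  have diff: "\<phi> b2 0 - \<phi> a1 0 = (b2 - a1) * v 0" using v[OF ends(2)] by simp
  with \<open>\<phi> a1 0 \<noteq> \<phi> b2 0\<close> have "v 0 \<noteq> 0" by auto
  then have "1 \<le> \<bar>v 0\<bar>" by arith
  then have "(b2 - a1) * 1 \<le> (b2 - a1) * \<bar>v 0\<bar>"
    using a1_le_b1 gap_pos a2_le_b2 by (intro mult_left_mono) auto
  also have "\<dots> = \<bar>\<phi> b2 0 - \<phi> a1 0\<bar>"
    unfolding diff abs_mult using a1_le_b1 gap_pos a2_le_b2 by simp
  finally have "b2 - a1 \<le> \<bar>\<phi> b2 0 - \<phi> a1 0\<bar>" by simp
  then have "int (card A + nat gap) \<le> int (nat \<bar>\<phi> b2 0 - \<phi> a1 0\<bar> + 1)"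
    using card_A gap_pos by simp
  moreover have "nat \<bar>\<phi> b2 0 - \<phi> a1 0\<bar> + 1 \<le> hull_points 1 B"
    using hull_points_1_ge[OF finite_B assms(2) in_B] .
  ultimately show ?thesis by linarith
qed

lemma fvol_short_gap:
  assumes "gap < max (b1 - a1) (b2 - a2)"
  shows "fvol A = card A + nat gap"
proof (rule fvol_eqI[OF _ F2_isomorphic_line_embedding])
  show "(\<lambda>z. vec2 z 0) ` A \<subseteq> lattice (fdim A)"
    using vec2_in_lattice by (auto simp: fdim_short_gap[OF assms])
  have "hull_points 1 ((\<lambda>z. vec2 z 0) ` A) \<le> nat (b2 - a1 + 1)"
    by (rule hull_points_1_le) (use a1_le_b1 gap_pos a2_le_b2 in \<open>auto simp: A_eq\<close>)
  moreover have "card A + nat gap \<le> hull_points 1 ((\<lambda>z. vec2 z 0) ` A)"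
    by (rule hull_points_ge_short_gap[OF assms _ F2_isomorphic_line_embedding])
       (use vec2_in_lattice in blast)
  moreover have "nat (b2 - a1 + 1) = card A + nat gap" using card_A gap_pos by simp
  ultimately show "hull_points (fdim A) ((\<lambda>z. vec2 z 0) ` A) = card A + nat gap"
    by (simp add: fdim_short_gap[OF assms])
qed (use hull_points_ge_short_gap[OF assms] in \<open>simp add: fdim_short_gap[OF assms]\<close>)

lemma F2_isomorphic_point_segment:
  assumes "a1 = b1 \<or> a2 = b2"
  shows "F2_isomorphic A ({0..int (card A) + gap - 1} - {1..gap})"
proof -
  have target: "{0..int (card A) + gap - 1} - {1..gap} = {0} \<union> {gap + 1..int (card A) + gap - 1}"
    using gap_pos by auto
  from assms consider "a1 = b1" | "a2 = b2" by blast
  then show ?thesis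
  proof cases
    case 1
    have "(\<lambda>x. - a1 + 1 * x) ` A = {0} \<union> {gap + 1..int (card A) + gap - 1}"
      using 1 card_A unfolding A_eq by (simp add: image_Un image_add_atLeastAtMost' algebra_simps)
    then show ?thesis using F2_isomorphic_affine_image[of 1 A "- a1"] target by simp
  next
    case 2
    have "(\<lambda>x. a2 + (- 1) * x) ` A = {0} \<union> {gap + 1..int (card A) + gap - 1}"
      using 2 card_A unfolding A_eq by (auto simp: image_Un)
    then show ?thesis using F2_isomorphic_affine_image[of "- 1" A a2] target by simp
  qed
qed

lemma not_extremal_if_short_gap:
  assumes "gap < max (b1 - a1) (b2 - a2)" "a1 < b1" "a2 < b2"
  shows "\<not> extremal A"
proof
  assume "extremal A"
  define k where "k = card A"
  define T where "T = card (sumset A A)"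
  define g where "g = int T - 2 * int k + 1"
  let ?A' = "{0..0} \<union> {g + 1..int k + g - 1}"
  have T_bounds: "2 * int k + gap \<le> int T" "int T \<le> 3 * int k - 4"
    using card_sumset_A card_A assms gap_pos unfolding T_def k_def
    by (auto simp: max_def split: if_split_asm)
  interpret A': two_segments ?A' 0 0 "g + 1" "int k + g - 1"
    by unfold_locales (use T_bounds gap_pos in \<open>auto simp: g_def\<close>)
  have short': "(g + 1) - 0 - 1 < max (0 - 0) ((int k + g - 1) - (g + 1))"
    using T_bounds unfolding g_def by simp
  have "card ?A' = k" using A'.card_A T_bounds unfolding g_def by simp
  moreover have "card (sumset ?A' ?A') = T"
    using A'.card_sumset_A \<open>card ?A' = k\<close> T_bounds gap_pos unfolding g_def
    by (auto simp: max_def split: if_split_asm)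
  moreover have "?A' \<subseteq> {0..}" using T_bounds gap_pos unfolding g_def by auto
  ultimately have "fvol ?A' \<le> vol_max k T 1"
    using fvol_le_vol_max[OF _ A'.finite_A] A'.fdim_short_gap[OF short'] by metis
  also have "\<dots> = fvol A"
    using \<open>extremal A\<close> fdim_short_gap[OF assms(1)] unfolding extremal_def k_def T_def by simp
  finally have "k + nat g \<le> k + nat gap"
    using A'.fvol_short_gap[OF short'] fvol_short_gap[OF assms(1)] \<open>card ?A' = k\<close>
    unfolding k_def by simp
  then show False using T_bounds gap_pos unfolding g_def by simp
qed

end

theorem lemma4p4:
  fixes A :: "int set" and k :: nat
  assumes "finite A" and "card A = k"
    and "extremal A"
    and "union_two_segments A"
  shows "(\<exists>b::nat. 1 \<le> b \<and> b \<le> k - 3 \<and>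
            F2_isomorphic A ({0..int (k + b) - 1} - {1..int b}) \<and>
            fdim A = 1 \<and> fvol A = k + b \<and> card (sumset A A) = 2 * k - 1 + b)
       \<or> (\<exists>k1 k2::nat. k1 + k2 = k \<and> k1 \<ge> 1 \<and> k2 \<ge> 1 \<and>
            F2_isomorphic A ({vec2 x 0 | x. 0 \<le> x \<and> x < int k1} \<union> {vec2 x 1 | x. 0 \<le> x \<and> x < int k2}) \<and>
            fdim A = 2 \<and> fvol A = k \<and> card (sumset A A) = 3 * k - 3)"
proof -
  obtain a1 b1 a2 b2 where "two_segments A a1 b1 a2 b2"
    using assms(4) unfolding union_two_segments_def two_segments_def by blast
  then interpret two_segments A a1 b1 a2 b2 .
  have k: "int k = (b1 - a1) + (b2 - a2) + 2" using card_A assms(2) by simp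
  consider (long) "max (b1 - a1) (b2 - a2) \<le> gap"
    | (point) "gap < max (b1 - a1) (b2 - a2)" "a1 = b1 \<or> a2 = b2"
    | (proper) "gap < max (b1 - a1) (b2 - a2)" "a1 < b1" "a2 < b2"
    using a1_le_b1 a2_le_b2 by linarith
  then show ?thesis
  proof cases
    case long
    then show ?thesis
      using F2_isomorphic_two_rows fdim_long_gap fvol_long_gap card_sumset_long_gap
        assms(2) k a1_le_b1 a2_le_b2
      by (intro disjI2 exI[of _ "nat (b1 - a1 + 1)"] exI[of _ "nat (b2 - a2 + 1)"])
         (auto simp: two_rows_def)
  next
    case point
    then have "gap \<le> int k - 3"
      using k a1_le_b1 a2_le_b2 by (auto simp: max_def split: if_split_asm)
    with point show ?thesis
      using F2_isomorphic_point_segment fdim_short_gap fvol_short_gap card_sumset_point_segment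
        assms(2) gap_pos
      by (intro disjI1 exI[of _ "nat gap"]) auto
  next
    case proper
    then show ?thesis using not_extremal_if_short_gap assms(3) by blast
  qed
qed

end
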